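(* Let $A\in\mathbb{C}^{n\times n}$ and let $X\in\mathbb{C}^{n\times n}$ be a matrix whose $j$-th column $x^{(j)}$ is an eigenvector of $A$ with $\|x^{(j)}\|_2=1$, for $j=1,\dots,n$. Suppose there is $k>0$ with $|X_{ij}|\le k/n^2$ for all $i\ne j$, and $n^3-3kn^2-3k^2>0$. Then $X$ is invertible and $$\kappa(X)=\|X\|_2\|X^{-1}\|_2\le\frac{n^3+3kn^2+k^2}{n^3-3kn^2-3k^2}.$$
   Context: $\kappa(X)=\|X\|_2\|X^{-1}\|_2$ is the spectral condition number. The hypothesis $|X_{ij}|\le k/n^2$ ($i\ne j$) is the situation produced by a matrix whose diagonal entries are pairwise separated by at least a constant times $n^2$ and whose off-diagonal row sums are bounded by a constant, with $x^{(j)}$ the unit eigenvector for the eigenvalue in the $j$-th Gershgorin disc. *)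

theory Defs
  imports "HOL-Analysis.Analysis"
begin

text \<open>Spectral (operator 2-) norm of a square complex matrix: the operator norm of
  the induced map on complex^'n, whose norm is the Euclidean 2-norm.\<close>
definition spec_norm :: "complex^'n^'n \<Rightarrow> real" where
  "spec_norm M = onorm (\<lambda>x. M *v x)"

definition cond_num :: "complex^'n^'n \<Rightarrow> real" where
  "cond_num M = spec_norm M * spec_norm (matrix_inv M)"

end

theory Submission
  imports Defs
begin

text \<open>Split \<open>X = D + E\<close> into its diagonal and off-diagonal parts. Each column is a unit vector
  whose off-diagonal entries are at most \<open>k/n\<^sup>2\<close>, so \<open>1 - k\<^sup>2/n\<^sup>3 \<le> |X\<^sub>j\<^sub>j| \<le> 1\<close>, while the
  entrywise bound gives \<open>\<parallel>E\<parallel>\<^sub>2 \<le> n \<cdot> k/n\<^sup>2 = k/n\<close>. Hence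
  \<open>(1 - k\<^sup>2/n\<^sup>3 - k/n)\<parallel>v\<parallel> \<le> \<parallel>Xv\<parallel> \<le> (1 + k/n)\<parallel>v\<parallel>\<close>, so \<open>X\<close> is invertible and \<open>\<kappa>(X)\<close> is at most
  the ratio of the two constants, which is below the stated bound.\<close>

lemma sum_norm_le_sqrt_card_mult_norm:
  fixes v :: "'a::real_normed_vector^'n"
  shows "(\<Sum>i\<in>UNIV. norm (v$i)) \<le> sqrt (real CARD('n)) * norm v"
  using L2_set_mult_ineq[of "\<lambda>i. norm (v$i)" "\<lambda>_. 1" UNIV]
  by (simp add: norm_vec_def L2_set_constant mult.commute)

lemma norm_matrix_vector_mult_le_entrywise:
  fixes E :: "'a::real_normed_field^'n^'m"
  assumes entry: "\<And>i j. norm (E$i$j) \<le> b"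
  shows "norm (E *v v) \<le> b * sqrt (real CARD('m)) * sqrt (real CARD('n)) * norm v"
proof -
  define S where "S = (\<Sum>j\<in>UNIV. norm (v$j))"
  have b0: "0 \<le> b"
    using entry[of undefined undefined] norm_ge_zero order_trans by blast
  have "norm ((E *v v)$i) \<le> b * S" for i
  proof -
    have "norm ((E *v v)$i) \<le> (\<Sum>j\<in>UNIV. norm (E$i$j * v$j))"
      unfolding matrix_vector_mult_def by (simp add: norm_sum)
    also have "\<dots> \<le> (\<Sum>j\<in>UNIV. b * norm (v$j))"
      by (intro sum_mono) (simp add: norm_mult entry mult_right_mono)
    finally show ?thesis
      by (simp add: S_def sum_distrib_left)
  qed
  then have "norm (E *v v) \<le> L2_set (\<lambda>_::'m. b * S) UNIV"
    unfolding norm_vec_def by (intro L2_set_mono) auto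
  also have "\<dots> = sqrt (real CARD('m)) * (b * S)"
    using b0 by (simp add: L2_set_constant S_def sum_nonneg)
  also have "\<dots> \<le> sqrt (real CARD('m)) * (b * (sqrt (real CARD('n)) * norm v))"
    using sum_norm_le_sqrt_card_mult_norm[of v] b0
    by (simp add: S_def mult_left_mono)
  finally show ?thesis
    by (simp add: algebra_simps)
qed

lemma norm_componentwise_mult_bounds:
  fixes d v :: "'a::real_normed_div_algebra^'n"
  assumes "0 \<le> m" and lower: "\<And>i. m \<le> norm (d$i)" and upper: "\<And>i. norm (d$i) \<le> u"
  shows "m * norm v \<le> norm (\<chi> i. d$i * v$i)"
    and "norm (\<chi> i. d$i * v$i) \<le> u * norm v"
proof -
  have "0 \<le> u"
    using upper[of undefined] norm_ge_zero order_trans by blast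
  have "m * norm v = L2_set (\<lambda>i. m * norm (v$i)) UNIV"
    unfolding norm_vec_def using \<open>0 \<le> m\<close> by (simp add: L2_set_right_distrib)
  also have "\<dots> \<le> L2_set (\<lambda>i. norm (d$i * v$i)) UNIV"
    using \<open>0 \<le> m\<close> by (intro L2_set_mono) (auto simp: norm_mult intro!: mult_right_mono lower)
  finally show "m * norm v \<le> norm (\<chi> i. d$i * v$i)"
    by (simp add: norm_vec_def)
  have "L2_set (\<lambda>i. norm (d$i * v$i)) UNIV \<le> L2_set (\<lambda>i. u * norm (v$i)) UNIV"
    by (intro L2_set_mono) (auto simp: norm_mult intro!: mult_right_mono upper)
  also have "\<dots> = u * norm v"
    unfolding norm_vec_def using \<open>0 \<le> u\<close> by (simp add: L2_set_right_distrib)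
  finally show "norm (\<chi> i. d$i * v$i) \<le> u * norm v"
    by (simp add: norm_vec_def)
qed

definition offdiag_part :: "'a::zero^'n^'n \<Rightarrow> 'a^'n^'n" where
  "offdiag_part M = (\<chi> i j. if i = j then 0 else M$i$j)"

lemma matrix_vector_mult_diag_offdiag_part:
  fixes M :: "'a::semiring_1^'n^'n"
  shows "M *v v = (\<chi> i. M$i$i * v$i) + offdiag_part M *v v"
proof -
  have "(\<Sum>j\<in>UNIV. M$i$j * v$j) = M$i$i * v$i + (\<Sum>j\<in>UNIV. offdiag_part M$i$j * v$j)" for i
  proof -
    have "(\<Sum>j\<in>UNIV. M$i$j * v$j)
        = (\<Sum>j\<in>UNIV. (if j = i then M$i$i * v$i else 0) + offdiag_part M$i$j * v$j)"
      by (intro sum.cong) (auto simp: offdiag_part_def)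
    then show ?thesis
      by (simp add: sum.distrib)
  qed
  then show ?thesis
    by (simp add: vec_eq_iff matrix_vector_mult_def)
qed

lemma norm_matrix_vector_mult_bounds_near_diagonal:
  fixes M :: "'a::real_normed_field^'n^'n"
  assumes "0 \<le> m" and diag_lower: "\<And>i. m \<le> norm (M$i$i)" and diag_upper: "\<And>i. norm (M$i$i) \<le> u"
    and "0 \<le> b" and off: "\<And>i j. i \<noteq> j \<Longrightarrow> norm (M$i$j) \<le> b"
  shows "(m - b * real CARD('n)) * norm v \<le> norm (M *v v)"
    and "norm (M *v v) \<le> (u + b * real CARD('n)) * norm v"
proof -
  let ?D = "\<chi> i. M$i$i * v$i"
  have "norm (offdiag_part M $ i $ j) \<le> b" for i j
    using off[of i j] \<open>0 \<le> b\<close> by (auto simp: offdiag_part_def)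
  then have "norm (offdiag_part M *v v)
      \<le> b * sqrt (real CARD('n)) * sqrt (real CARD('n)) * norm v"
    by (rule norm_matrix_vector_mult_le_entrywise)
  then have off_bound: "norm (offdiag_part M *v v) \<le> b * real CARD('n) * norm v"
    by (simp add: mult.assoc)
  have D: "m * norm v \<le> norm ?D" "norm ?D \<le> u * norm v"
    using norm_componentwise_mult_bounds[of m "\<chi> i. M$i$i" u v] \<open>0 \<le> m\<close> diag_lower diag_upper
    by simp_all
  have "norm ?D \<le> norm (M *v v) + norm (offdiag_part M *v v)"
    using norm_triangle_ineq4[of "M *v v" "offdiag_part M *v v"]
      matrix_vector_mult_diag_offdiag_part[of M v]
    by simp
  then show "(m - b * real CARD('n)) * norm v \<le> norm (M *v v)"
    using D off_bound by (simp add: algebra_simps)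
  have "norm (M *v v) \<le> norm ?D + norm (offdiag_part M *v v)"
    using norm_triangle_ineq matrix_vector_mult_diag_offdiag_part[of M v] by metis
  then show "norm (M *v v) \<le> (u + b * real CARD('n)) * norm v"
    using D off_bound by (simp add: algebra_simps)
qed

lemma unit_vector_dominant_component:
  fixes x :: "'a::real_normed_vector^'n"
  assumes unit: "norm x = 1" and small: "\<And>i. i \<noteq> j \<Longrightarrow> norm (x$i) \<le> b"
  shows "1 - (real CARD('n) - 1) * b^2 \<le> norm (x$j)"
proof -
  have "1 = (\<Sum>i\<in>UNIV. (norm (x$i))^2)"
    using unit by (simp add: norm_vec_def L2_set_def sum_nonneg)
  also have "\<dots> = (norm (x$j))^2 + (\<Sum>i\<in>UNIV-{j}. (norm (x$i))^2)"
    by (simp add: sum.remove)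
  also have "(\<Sum>i\<in>UNIV-{j}. (norm (x$i))^2) \<le> (\<Sum>i\<in>UNIV-{j}. b^2)"
    by (intro sum_mono power_mono) (auto intro: small)
  also have "(\<Sum>i\<in>UNIV-{j}. b^2) = (real CARD('n) - 1) * b^2"
    by (simp add: card_Diff_singleton of_nat_diff)
  also have "(norm (x$j))^2 \<le> norm (x$j)"
    using Finite_Cartesian_Product.norm_nth_le[of x j] unit
    by (simp add: power2_eq_square mult_left_le_one_le)
  finally show ?thesis
    by simp
qed

lemma diagonal_bounds_of_unit_columns:
  fixes X :: "'a::real_normed_vector^'n^'n"
  assumes unit: "\<And>j. norm (column j X) = 1" and off: "\<And>i j. i \<noteq> j \<Longrightarrow> norm (X$i$j) \<le> b"
  shows "1 - (real CARD('n) - 1) * b^2 \<le> norm (X$j$j)" and "norm (X$j$j) \<le> 1"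
  using unit_vector_dominant_component[OF unit, where j = j and b = b]
    Finite_Cartesian_Product.norm_nth_le[of "column j X" j] unit[of j] off
  by (simp_all add: column_def)

lemma matrix_inv_right:
  fixes A :: "'a::semiring_1^'n^'n"
  assumes "invertible A"
  shows "A ** matrix_inv A = mat 1"
  using assms unfolding invertible_def matrix_inv_def by (rule someI_ex[THEN conjunct1])

lemma invertible_if_norm_bounded_below:
  fixes X :: "'a::real_normed_field^'n^'n"
  assumes "c > 0" and below: "\<And>v. c * norm v \<le> norm (X *v v)"
  shows "invertible X"
proof -
  have "inj ((*v) X)"
  proof (rule injI)
    fix x y
    assume "X *v x = X *v y"
    then have "c * norm (x - y) \<le> 0"
      using below[of "x - y"] by (simp add: matrix_vector_mult_diff_distrib)
    with \<open>c > 0\<close> show "x = y"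
      by (simp add: mult_le_0_iff)
  qed
  then show ?thesis
    by (simp add: invertible_left_inverse matrix_left_invertible_injective)
qed

lemma cond_num_le_of_norm_bounds:
  fixes X :: "complex^'n^'n"
  assumes "c > 0"
    and below: "\<And>v. c * norm v \<le> norm (X *v v)"
    and above: "\<And>v. norm (X *v v) \<le> C * norm v"
  shows "cond_num X \<le> C / c"
proof -
  have inverse: "X ** matrix_inv X = mat 1"
    using invertible_if_norm_bounded_below[OF \<open>c > 0\<close> below] by (rule matrix_inv_right)
  have X: "spec_norm X \<le> C"
    unfolding spec_norm_def by (rule onorm_le) (rule above)
  have inv: "spec_norm (matrix_inv X) \<le> 1 / c"
    unfolding spec_norm_def
  proof (rule onorm_le)
    fix y
    have "c * norm (matrix_inv X *v y) \<le> norm y"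
      using below[of "matrix_inv X *v y"] by (simp add: matrix_vector_mul_assoc inverse)
    with \<open>c > 0\<close> show "norm (matrix_inv X *v y) \<le> 1 / c * norm y"
      by (simp add: field_simps)
  qed
  have "0 \<le> spec_norm X" "0 \<le> spec_norm (matrix_inv X)"
    unfolding spec_norm_def by (simp_all add: onorm_pos_le)
  then have "spec_norm X * spec_norm (matrix_inv X) \<le> C * (1 / c)"
    using X inv by (intro mult_mono) auto
  then show ?thesis
    by (simp add: cond_num_def)
qed

lemma perturbation_ratio_le:
  fixes N k :: real
  assumes "N > 0" "k > 0" and cond: "N^3 - 3 * k * N^2 - 3 * k^2 > 0"
  shows "(1 + k / N) / (1 - k^2 / N^3 - k / N)
    \<le> (N^3 + 3 * k * N^2 + k^2) / (N^3 - 3 * k * N^2 - 3 * k^2)"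
proof -
  define a b e where "a = N^3" and "b = k * N^2" and "e = k^2"
  have "a > 0" "b > 0" "e > 0" "a - 3 * b - 3 * e > 0"
    using assms by (simp_all add: a_def b_def e_def)
  have "k / N = b / a" "k^2 / N^3 = e / a"
    using \<open>N > 0\<close> by (simp_all add: a_def b_def e_def field_simps power2_eq_square power3_eq_cube)
  then have "(1 + k / N) / (1 - k^2 / N^3 - k / N) = (1 + b / a) / (1 - e / a - b / a)"
    by (simp only:)
  also have "\<dots> = ((a + b) / a) / ((a - b - e) / a)"
    using \<open>a > 0\<close> by (simp add: add_divide_distrib diff_divide_distrib algebra_simps)
  also have "\<dots> = (a + b) / (a - b - e)"
    using \<open>a > 0\<close> by simp
  finally have lhs: "(1 + k / N) / (1 - k^2 / N^3 - k / N) = (a + b) / (a - b - e)" .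
  have "(a + 3 * b + e) * (a - b - e) - (a + b) * (a - 3 * b - 3 * e)
      = (a - 3 * b - 3 * e) * (4 * b + 3 * e) + 20 * b * e + 12 * b^2 + 8 * e^2"
    by (simp add: algebra_simps power2_eq_square)
  also have "\<dots> \<ge> 0"
    using \<open>b > 0\<close> \<open>e > 0\<close> \<open>a - 3 * b - 3 * e > 0\<close> by simp
  finally have "(a + b) / (a - b - e) \<le> (a + 3 * b + e) / (a - 3 * b - 3 * e)"
    using \<open>b > 0\<close> \<open>e > 0\<close> \<open>a - 3 * b - 3 * e > 0\<close> by (simp add: divide_simps)
  then show ?thesis
    unfolding lhs by (simp add: a_def b_def e_def mult.assoc)
qed

theorem theorem3:
  fixes A X :: "complex^'n^'n" and k :: real
  assumes eigvec: "\<And>j. \<exists>c::complex. A *v column j X = c *s column j X"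
    and unit: "\<And>j. norm (column j X) = 1"
    and kpos: "k > 0"
    and offdiag: "\<And>i j. i \<noteq> j \<Longrightarrow> cmod (X $ i $ j) \<le> k / (real CARD('n))^2"
    and cond: "(real CARD('n))^3 - 3 * k * (real CARD('n))^2 - 3 * k^2 > 0"
  shows "invertible X \<and>
    cond_num X \<le> ((real CARD('n))^3 + 3 * k * (real CARD('n))^2 + k^2)
                   / ((real CARD('n))^3 - 3 * k * (real CARD('n))^2 - 3 * k^2)"
proof -
  define N where "N = real CARD('n)"
  define m where "m = 1 - k^2 / N^3"
  have "N > 0"
    by (simp add: N_def)
  have "N^3 - 3 * k * N^2 - 3 * k^2 > 0" "0 < k^2" "0 < k * N^2"
    using cond kpos \<open>N > 0\<close> by (simp_all add: N_def)
  then have "k^2 + k * N^2 < N^3"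
    by linarith
  then have small: "k^2 / N^3 + k / N < 1"
    using \<open>N > 0\<close> by (simp add: field_simps power2_eq_square power3_eq_cube)
  have diag: "1 - (N - 1) * (k / N^2)^2 \<le> cmod (X$j$j)" "cmod (X$j$j) \<le> 1" for j
    using diagonal_bounds_of_unit_columns[of X "k / N^2" j] unit offdiag by (simp_all add: N_def)
  have "(N - 1) * (k / N^2)^2 \<le> k^2 / N^3"
    using \<open>N > 0\<close> by (simp add: field_simps power2_eq_square power3_eq_cube)
  then have diag_lower: "m \<le> cmod (X$j$j)" for j
    using diag(1)[of j] by (simp add: m_def)
  have "0 < k / N"
    using kpos \<open>N > 0\<close> by simp
  then have "0 \<le> m"
    using small unfolding m_def by linarith
  moreover have "0 \<le> k / N^2" "k / N^2 * N = k / N"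
    using kpos \<open>N > 0\<close> by (simp_all add: power2_eq_square)
  ultimately have below: "(m - k / N) * norm v \<le> norm (X *v v)"
    and above: "norm (X *v v) \<le> (1 + k / N) * norm v" for v
    using norm_matrix_vector_mult_bounds_near_diagonal[of m X 1 "k / N^2"] diag_lower diag(2) offdiag
    by (simp_all add: N_def)
  have "m - k / N > 0"
    using small by (simp add: m_def)
  then have "invertible X" "cond_num X \<le> (1 + k / N) / (m - k / N)"
    using invertible_if_norm_bounded_below below cond_num_le_of_norm_bounds above by blast+
  with perturbation_ratio_le[OF \<open>N > 0\<close> kpos] cond show ?thesis
    by (simp add: m_def N_def diff_diff_eq)
qed

end
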